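(* Let $\Omega\subseteq\mathbb{R}^d$ be open and work in the ultrapower described in the context with $\rho=\langle R_\varphi\rangle$. Then: (i) for $(f_\varphi)\in\mathcal{E}(\Omega)^{\mathcal{D}_0}$, $(f_\varphi)\in\mathcal{M}(\mathcal{E}(\Omega)^{\mathcal{D}_0})$ if and only if $\langle f_\varphi\rangle\in\mathcal{M}_\rho({}^*\mathcal{E}(\Omega))$; (ii) the map $\widehat{f_\varphi}\mapsto\widehat{\langle f_\varphi\rangle}$ is a well-defined isomorphism of differential algebras from $\widehat{\mathcal{E}(\Omega)^{\mathcal{D}_0}}$ onto ${}^\rho\mathcal{E}(\Omega)$.
   Context: Fix $\mathcal{D}_0=\mathcal{D}(\mathbb{R}^d)$. For $\varphi\in\mathcal{D}_0$ let $R_\varphi=\sup\{\|x\|:\varphi(x)\neq0\}$ if $\varphi\neq0$, $R_0=1$. For $n\in\mathbb{N}$, $\mathcal{D}_n$ is the set of $\varphi\in\mathcal{D}_0$ that are real-valued, even, with $R_\varphi\le1/n$, $\int\varphi=1$, $\int x^\alpha\varphi(x)dx=0$ for $1\le|\alpha|\le n$, $\int|\varphi|\le1+1/n$, and $\sup_x|\partial^\alpha\varphi(x)|\le R_\varphi^{-2(|\alpha|+d)}$ for $|\alpha|\le n$. $\mathcal{U}$ is a fixed free $\mathfrak c^+$-good ultrafilter on $\mathcal{D}_0$ containing every $\mathcal{D}_n$; "a.e." means on a set belonging to $\mathcal U$. Asymptotic functions: $\mathcal{E}(\Omega)=C^\infty(\Omega;\mathbb{C})$; $\mathcal{M}(\mathcal{E}(\Omega)^{\mathcal{D}_0})$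 = nets $(f_\varphi)$ in $\mathcal{E}(\Omega)$ such that for every compact $K\subset\Omega$ and $\alpha\in\mathbb{N}_0^d$ there is $m$ with $\sup_K|\partial^\alpha f_\varphi|\le R_\varphi^{-m}$ a.e.; $\mathcal{N}$ = nets with $\sup_K|\partial^\alpha f_\varphi|\le R_\varphi^{p}$ a.e. for all $K,\alpha,p\in\mathbb{N}$; $\widehat{\mathcal{E}(\Omega)^{\mathcal{D}_0}}=\mathcal{M}/\mathcal{N}$ with pointwise (in $\varphi$) operations and derivatives. Ultrapower (distributional non-standard model): two nets are equivalent if they agree a.e.; ${}^*\mathbb{R}$, ${}^*\mathbb{C}$, ${}^*\mathbb{R}^d$, ${}^*\mathcal{E}(\Omega)$ are the sets of classes $\langle\cdot\rangle$ of nets in $\mathbb{R},\mathbb{C},\mathbb{R}^d,\mathcal{E}(\Omega)$; ${}^*\Omega$ = classes of nets $(x_\varphi)$ with $x_\varphi\in\Omega$ a.e.; for $f=\langle f_\varphi\rangle$ and $\xi=\langle x_\varphi\rangle\in{}^*\Omega$, $f(\xi)=\langle f_\varphi(x_\varphi)\rangle$ and $\partial^\alpha f=\langle\partial^\alpha f_\varphi\rangle$; order and absolute values componentwise a.e.; standard objects embedded by constant nets. $\rho=\langle R_\varphi\rangle$. $\mathcal{M}_\rho({}^*\mathbb{C})=\{\zeta:|\zeta|\le\rho^{-m}\text{ some }m\in\mathbb{N}\}$, $\mathcal{N}_\rho({}^*\mathbb{C})=\{\zeta:|\zeta|<\rho^n\ \forall n\in\mathbb{N}\}$. $\mu(\Omega)=\{x+dx:x\in\Omega,\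 dx\in{}^*\mathbb{R}^d,\ \|dx\|<1/n\ \forall n\in\mathbb{N}\}$. $\mathcal{M}_\rho({}^*\mathcal{E}(\Omega))=\{f\in{}^*\mathcal{E}(\Omega):\partial^\alpha f(x)\in\mathcal{M}_\rho({}^*\mathbb{C})\ \forall\alpha\in\mathbb{N}_0^d,\ \forall x\in\mu(\Omega)\}$, $\mathcal{N}_\rho({}^*\mathcal{E}(\Omega))$ likewise with $\mathcal{N}_\rho({}^*\mathbb{C})$; ${}^\rho\mathcal{E}(\Omega)=\mathcal{M}_\rho({}^*\mathcal{E}(\Omega))/\mathcal{N}_\rho({}^*\mathcal{E}(\Omega))$ with classes $\widehat f$. *)

theory Defs
  imports "HOL-Analysis.Analysis"
begin

type_synonym 'd fn = "real^'d \<Rightarrow> complex"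
type_synonym 'd net = "'d fn \<Rightarrow> 'd fn"

definition partial :: "'d::finite \<Rightarrow> 'd fn \<Rightarrow> 'd fn" where
  "partial i f x = vector_derivative (\<lambda>t::real. f (x + t *\<^sub>R axis i 1)) (at 0)"

definition smooth_on :: "(real^'d::finite) set \<Rightarrow> 'd fn \<Rightarrow> bool" where
  "smooth_on \<Omega> f \<longleftrightarrow>
     (\<forall>is::'d list. continuous_on \<Omega> (foldr partial is f) \<and>
        (\<forall>i. \<forall>x\<in>\<Omega>. (\<lambda>t::real. foldr partial is f (x + t *\<^sub>R axis i 1)) differentiable (at 0)))"

definition enum_list :: "'d::finite list" where
  "enum_list = (SOME xs. distinct xs \<and> set xs = UNIV)"

definition dmulti :: "('d::finite \<Rightarrow> nat) \<Rightarrow> 'd fn \<Rightarrow> 'd fn" where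
  "dmulti \<alpha> f = fold (\<lambda>i g. (partial i ^^ \<alpha> i) g) enum_list f"

definition mabs :: "('d::finite \<Rightarrow> nat) \<Rightarrow> nat" where
  "mabs \<alpha> = (\<Sum>i\<in>UNIV. \<alpha> i)"

definition D0 :: "'d::finite fn set" where
  "D0 = {\<phi>. smooth_on UNIV \<phi> \<and> compact (closure {x. \<phi> x \<noteq> 0})}"

definition Rphi :: "'d::finite fn \<Rightarrow> real" where
  "Rphi \<phi> = (if \<forall>x. \<phi> x = 0 then 1 else Sup {norm x | x. \<phi> x \<noteq> 0})"

definition Dn :: "nat \<Rightarrow> 'd::finite fn set" where
  "Dn n = {\<phi>\<in>D0.
      (\<forall>x. Im (\<phi> x) = 0) \<and> (\<forall>x. \<phi> (- x) = \<phi> x) \<and> Rphi \<phi> \<le> 1 / real n \<and>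
      (LINT x|lborel. \<phi> x) = 1 \<and>
      (\<forall>\<alpha>. 1 \<le> mabs \<alpha> \<and> mabs \<alpha> \<le> n \<longrightarrow>
          (LINT x|lborel. complex_of_real (\<Prod>i\<in>UNIV. (x $ i) ^ \<alpha> i) * \<phi> x) = 0) \<and>
      (LINT x|lborel. norm (\<phi> x)) \<le> 1 + 1 / real n \<and>
      (\<forall>\<alpha>. mabs \<alpha> \<le> n \<longrightarrow>
          (\<forall>x. norm (dmulti \<alpha> \<phi> x) \<le> (1 / Rphi \<phi>) ^ (2 * (mabs \<alpha> + CARD('d)))))}"

definition ultrafilter_on :: "'a set \<Rightarrow> 'a set set \<Rightarrow> bool" where
  "ultrafilter_on I U \<longleftrightarrow> U \<subseteq> Pow I \<and> I \<in> U \<and> {} \<notin> U \<and>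
     (\<forall>A\<in>U. \<forall>B\<in>U. A \<inter> B \<in> U) \<and>
     (\<forall>A\<in>U. \<forall>B. A \<subseteq> B \<and> B \<subseteq> I \<longrightarrow> B \<in> U) \<and>
     (\<forall>A. A \<subseteq> I \<longrightarrow> A \<in> U \<or> I - A \<in> U)"

definition free_ultrafilter_on :: "'a set \<Rightarrow> 'a set set \<Rightarrow> bool" where
  "free_ultrafilter_on I U \<longleftrightarrow> ultrafilter_on I U \<and> (\<forall>x\<in>I. {x} \<notin> U)"

text \<open>Keisler's kappa-goodness for kappa = c^+: index cardinals lambda < c^+, i.e.
  |lambda| <= c, are represented by subsets A of the reals.\<close>
definition cplus_good :: "'a set set \<Rightarrow> bool" where
  "cplus_good U \<longleftrightarrow>
    (\<forall>(A::real set) (f::real set \<Rightarrow> 'a set).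
      (\<forall>s. finite s \<and> s \<subseteq> A \<longrightarrow> f s \<in> U) \<and>
      (\<forall>s t. finite t \<and> t \<subseteq> A \<and> s \<subseteq> t \<longrightarrow> f t \<subseteq> f s) \<longrightarrow>
      (\<exists>g::real set \<Rightarrow> 'a set.
         (\<forall>s. finite s \<and> s \<subseteq> A \<longrightarrow> g s \<in> U \<and> g s \<subseteq> f s) \<and>
         (\<forall>s t. finite s \<and> s \<subseteq> A \<and> finite t \<and> t \<subseteq> A \<longrightarrow> g (s \<union> t) = g s \<inter> g t)))"

definition ae :: "'d::finite fn set set \<Rightarrow> ('d fn \<Rightarrow> bool) \<Rightarrow> bool" where
  "ae U P \<longleftrightarrow> {\<phi>\<in>D0. P \<phi>} \<in> U"

definition net_in_E :: "(real^'d::finite) set \<Rightarrow> 'd net \<Rightarrow> bool" where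
  "net_in_E \<Omega> f \<longleftrightarrow> (\<forall>\<phi>\<in>D0. smooth_on \<Omega> (f \<phi>))"

definition Mod :: "'d::finite fn set set \<Rightarrow> (real^'d) set \<Rightarrow> 'd net \<Rightarrow> bool" where
  "Mod U \<Omega> f \<longleftrightarrow> net_in_E \<Omega> f \<and>
     (\<forall>K \<alpha>. compact K \<and> K \<subseteq> \<Omega> \<longrightarrow>
        (\<exists>m::nat. m \<ge> 1 \<and> ae U (\<lambda>\<phi>. \<forall>x\<in>K. norm (dmulti \<alpha> (f \<phi>) x) \<le> (1 / Rphi \<phi>) ^ m)))"

definition Neg :: "'d::finite fn set set \<Rightarrow> (real^'d) set \<Rightarrow> 'd net \<Rightarrow> bool" where
  "Neg U \<Omega> f \<longleftrightarrow> net_in_E \<Omega> f \<and>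
     (\<forall>K \<alpha> (p::nat). compact K \<and> K \<subseteq> \<Omega> \<and> p \<ge> 1 \<longrightarrow>
        ae U (\<lambda>\<phi>. \<forall>x\<in>K. norm (dmulti \<alpha> (f \<phi>) x) \<le> Rphi \<phi> ^ p))"

definition relMN :: "'d::finite fn set set \<Rightarrow> (real^'d) set \<Rightarrow> ('d net \<times> 'd net) set" where
  "relMN U \<Omega> = {(f, g). Mod U \<Omega> f \<and> Mod U \<Omega> g \<and> Neg U \<Omega> (\<lambda>\<phi> x. f \<phi> x - g \<phi> x)}"

definition Ehat :: "'d::finite fn set set \<Rightarrow> (real^'d) set \<Rightarrow> 'd net set set" where
  "Ehat U \<Omega> = {f. Mod U \<Omega> f} // relMN U \<Omega>"

section \<open>The ultrapower side (elements represented by nets; all predicates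
  below are invariant under a.e. equality)\<close>

definition star_Mrho :: "'d::finite fn set set \<Rightarrow> ('d fn \<Rightarrow> complex) \<Rightarrow> bool" where
  "star_Mrho U \<zeta> \<longleftrightarrow> (\<exists>m::nat. m \<ge> 1 \<and> ae U (\<lambda>\<phi>. norm (\<zeta> \<phi>) \<le> (1 / Rphi \<phi>) ^ m))"

definition star_Nrho :: "'d::finite fn set set \<Rightarrow> ('d fn \<Rightarrow> complex) \<Rightarrow> bool" where
  "star_Nrho U \<zeta> \<longleftrightarrow> (\<forall>n::nat. n \<ge> 1 \<longrightarrow> ae U (\<lambda>\<phi>. norm (\<zeta> \<phi>) < Rphi \<phi> ^ n))"

text \<open>The monad mu(Omega): points x + dx with x in Omega standard and dx infinitesimal.\<close>
definition monad :: "'d::finite fn set set \<Rightarrow> (real^'d) set \<Rightarrow> ('d fn \<Rightarrow> real^'d) \<Rightarrow> bool" where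
  "monad U \<Omega> \<xi> \<longleftrightarrow> (\<exists>x\<in>\<Omega>. \<forall>n::nat. n \<ge> 1 \<longrightarrow> ae U (\<lambda>\<phi>. norm (\<xi> \<phi> - x) < 1 / real n))"

definition Mrho_E :: "'d::finite fn set set \<Rightarrow> (real^'d) set \<Rightarrow> 'd net \<Rightarrow> bool" where
  "Mrho_E U \<Omega> f \<longleftrightarrow> net_in_E \<Omega> f \<and>
     (\<forall>\<alpha> \<xi>. monad U \<Omega> \<xi> \<longrightarrow> star_Mrho U (\<lambda>\<phi>. dmulti \<alpha> (f \<phi>) (\<xi> \<phi>)))"

definition Nrho_E :: "'d::finite fn set set \<Rightarrow> (real^'d) set \<Rightarrow> 'd net \<Rightarrow> bool" where
  "Nrho_E U \<Omega> f \<longleftrightarrow> net_in_E \<Omega> f \<and>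
     (\<forall>\<alpha> \<xi>. monad U \<Omega> \<xi> \<longrightarrow> star_Nrho U (\<lambda>\<phi>. dmulti \<alpha> (f \<phi>) (\<xi> \<phi>)))"

definition relRho :: "'d::finite fn set set \<Rightarrow> (real^'d) set \<Rightarrow> ('d net \<times> 'd net) set" where
  "relRho U \<Omega> = {(f, g). Mrho_E U \<Omega> f \<and> Mrho_E U \<Omega> g \<and> Nrho_E U \<Omega> (\<lambda>\<phi> x. f \<phi> x - g \<phi> x)}"

definition rhoE :: "'d::finite fn set set \<Rightarrow> (real^'d) set \<Rightarrow> 'd net set set" where
  "rhoE U \<Omega> = {f. Mrho_E U \<Omega> f} // relRho U \<Omega>"

text \<open>The map  class of (f_phi)  |->  class of <f_phi>.\<close>
definition Phi :: "'d::finite fn set set \<Rightarrow> (real^'d) set \<Rightarrow> 'd net set \<Rightarrow> 'd net set" where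
  "Phi U \<Omega> X = (\<Union>f\<in>X. relRho U \<Omega> `` {f})"

definition qadd :: "('d::finite net \<times> 'd net) set \<Rightarrow> 'd net set \<Rightarrow> 'd net set \<Rightarrow> 'd net set" where
  "qadd R X Y = \<Union>{R `` {\<lambda>\<phi> x. f \<phi> x + g \<phi> x} | f g. f \<in> X \<and> g \<in> Y}"

definition qmul :: "('d::finite net \<times> 'd net) set \<Rightarrow> 'd net set \<Rightarrow> 'd net set \<Rightarrow> 'd net set" where
  "qmul R X Y = \<Union>{R `` {\<lambda>\<phi> x. f \<phi> x * g \<phi> x} | f g. f \<in> X \<and> g \<in> Y}"

definition qscal :: "('d::finite net \<times> 'd net) set \<Rightarrow> complex \<Rightarrow> 'd net set \<Rightarrow> 'd net set" where
  "qscal R c X = \<Union>{R `` {\<lambda>\<phi> x. c * f \<phi> x} | f. f \<in> X}"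

definition qder :: "('d::finite net \<times> 'd net) set \<Rightarrow> ('d \<Rightarrow> nat) \<Rightarrow> 'd net set \<Rightarrow> 'd net set" where
  "qder R \<alpha> X = \<Union>{R `` {\<lambda>\<phi>. dmulti \<alpha> (f \<phi>)} | f. f \<in> X}"

definition qone :: "('d::finite net \<times> 'd net) set \<Rightarrow> 'd net set" where
  "qone R = R `` {\<lambda>\<phi> x. 1}"

end

theory Submission
  imports Defs
begin

text \<open>Moderateness and negligibility of a net bound the derivatives of \<open>f\<^sub>\<phi>\<close> uniformly on
  compact subsets of \<open>\<Omega>\<close>, while their ultrapower counterparts bound them at the points of the
  monad \<open>\<mu>(\<Omega>)\<close>. A monad point lies a.e. in a compact ball inside \<open>\<Omega>\<close>; conversely, for compact
  \<open>K\<close> the points where \<open>|\<partial>\<^sup>\<alpha> f\<^sub>\<phi>|\<close> is maximal on \<open>K\<close> have an ultralimit in \<open>K\<close> (compactness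
  plus the ultrafilter property), so they form a point of \<open>\<mu>(\<Omega>)\<close>. Hence the moderate and the
  negligible nets are the same on both sides, the two quotient relations coincide, and the map
  of the theorem is the identity on classes.\<close>

lemma funpow_partial_eq_foldr: "partial i ^^ n = foldr partial (replicate n i)"
  by (induction n) simp_all

lemma fold_funpow_partial_eq_foldr: "\<exists>ds. fold (\<lambda>i. partial i ^^ \<alpha> i) xs = foldr partial ds"
proof (induction xs)
  case Nil
  show ?case by (rule exI[of _ "[]"]) simp
next
  case (Cons a xs)
  then obtain ds where "fold (\<lambda>i. partial i ^^ \<alpha> i) xs = foldr partial ds" by blast
  then have "fold (\<lambda>i. partial i ^^ \<alpha> i) (a # xs) = foldr partial ds \<circ> foldr partial (replicate (\<alpha> a) a)"
    by (simp only: fold.simps funpow_partial_eq_foldr)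
  also have "\<dots> = foldr partial (ds @ replicate (\<alpha> a) a)"
    by (rule ext) (simp only: comp_apply foldr_append)
  finally show ?case ..
qed

lemma dmulti_eq_foldr_partial: "\<exists>ds. dmulti \<alpha> = foldr partial ds"
  using fold_funpow_partial_eq_foldr unfolding dmulti_def[abs_def] by metis

lemma eventually_line_in_open:
  fixes x v :: "'a::real_normed_vector"
  assumes "open \<Omega>" "x \<in> \<Omega>"
  shows "\<forall>\<^sub>F t in nhds 0. x + t *\<^sub>R v \<in> \<Omega>"
proof (rule topological_tendstoD[OF _ assms])
  show "((\<lambda>t. x + t *\<^sub>R v) \<longlongrightarrow> x) (nhds 0)"
    using tendsto_add[OF tendsto_const tendsto_scaleR[OF filterlim_ident tendsto_const]]
    by (metis add_0_right scale_zero_left)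
qed

lemma foldr_partial_diff:
  assumes "open \<Omega>" "smooth_on \<Omega> F" "smooth_on \<Omega> G" "x \<in> \<Omega>"
  shows "foldr partial ds (\<lambda>x. F x - G x) x = foldr partial ds F x - foldr partial ds G x"
  using assms(4)
proof (induction ds arbitrary: x)
  case (Cons i ds)
  let ?line = "\<lambda>H t. foldr partial ds H (x + t *\<^sub>R axis i 1)"
  have "\<forall>\<^sub>F t in nhds 0. ?line (\<lambda>x. F x - G x) t = ?line F t - ?line G t"
    using eventually_line_in_open[OF assms(1) Cons.prems] by eventually_elim (rule Cons.IH)
  then have "vector_derivative (?line (\<lambda>x. F x - G x)) (at 0)
      = vector_derivative (\<lambda>t. ?line F t - ?line G t) (at 0)"
    by (intro vector_derivative_cong_eq) (auto elim: eventually_mono)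
  also have "\<dots> = vector_derivative (?line F) (at 0) - vector_derivative (?line G) (at 0)"
    using assms(2,3) Cons.prems unfolding smooth_on_def by (intro vector_derivative_diff_at) auto
  finally show ?case by (simp only: foldr_Cons comp_apply partial_def[of i])
qed simp

lemma smooth_on_diff:
  assumes "open \<Omega>" "smooth_on \<Omega> F" "smooth_on \<Omega> G"
  shows "smooth_on \<Omega> (\<lambda>x. F x - G x)"
  unfolding smooth_on_def
proof (intro allI conjI ballI)
  fix ds :: "'a list" and i and x
  note eq = foldr_partial_diff[OF assms, of _ ds]
  show "continuous_on \<Omega> (foldr partial ds (\<lambda>x. F x - G x))"
    using assms(2,3) unfolding smooth_on_def
    by (subst continuous_on_cong[OF refl eq]) (auto intro!: continuous_on_diff)
  assume "x \<in> \<Omega>"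
  let ?line = "\<lambda>H t. foldr partial ds H (x + t *\<^sub>R axis i 1)"
  have "?line F differentiable at 0" "?line G differentiable at 0"
    using assms(2,3) \<open>x \<in> \<Omega>\<close> unfolding smooth_on_def by blast+
  then have "(\<lambda>t. ?line F t - ?line G t) differentiable at 0"
    by (rule differentiable_diff)
  then obtain D where "((\<lambda>t. ?line F t - ?line G t) has_derivative D) (at 0)"
    unfolding differentiable_def ..
  moreover have "\<forall>\<^sub>F t in at 0. ?line F t - ?line G t = ?line (\<lambda>x. F x - G x) t"
    using eventually_line_in_open[OF assms(1) \<open>x \<in> \<Omega>\<close>, of "axis i 1"]
    by (auto simp: eq eventually_at_filter elim: eventually_mono)
  moreover have "?line F 0 - ?line G 0 = ?line (\<lambda>x. F x - G x) 0"
    using eq \<open>x \<in> \<Omega>\<close> by simp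
  ultimately have "(?line (\<lambda>x. F x - G x) has_derivative D) (at 0)"
    by (rule has_derivative_transform_eventually) simp
  then show "?line (\<lambda>x. F x - G x) differentiable at 0"
    unfolding differentiable_def by blast
qed

lemma dmulti_diff:
  assumes "open \<Omega>" "smooth_on \<Omega> F" "smooth_on \<Omega> G" "x \<in> \<Omega>"
  shows "dmulti \<alpha> (\<lambda>x. F x - G x) x = dmulti \<alpha> F x - dmulti \<alpha> G x"
  using dmulti_eq_foldr_partial[of \<alpha>] foldr_partial_diff[OF assms] by metis

lemma continuous_on_dmulti: "smooth_on \<Omega> F \<Longrightarrow> continuous_on \<Omega> (dmulti \<alpha> F)"
  using dmulti_eq_foldr_partial[of \<alpha>] unfolding smooth_on_def by metis

lemma ultrafilter_onD:
  assumes "ultrafilter_on I U"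
  shows "I \<in> U" "{} \<notin> U" "A \<in> U \<Longrightarrow> B \<in> U \<Longrightarrow> A \<inter> B \<in> U"
    "A \<in> U \<Longrightarrow> A \<subseteq> B \<Longrightarrow> B \<subseteq> I \<Longrightarrow> B \<in> U" "A \<subseteq> I \<Longrightarrow> A \<in> U \<or> I - A \<in> U"
  using assms unfolding ultrafilter_on_def by blast+

text \<open>The a.e. quantifier as a filter. \<open>ae U\<close> satisfies the filter axioms only when \<open>U\<close> is an
  ultrafilter on \<open>D0\<close>; otherwise \<open>Abs_filter\<close> yields a junk filter.\<close>

definition ufilter :: "'d::finite fn set set \<Rightarrow> 'd fn filter" where
  "ufilter U = Abs_filter (ae U)"

lemma eventually_ufilter:
  fixes U :: "'d::finite fn set set"
  assumes uf: "ultrafilter_on D0 U"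
  shows "eventually P (ufilter U) \<longleftrightarrow> ae U P"
proof -
  have "is_filter (ae U)"
  proof
    show "ae U (\<lambda>\<phi>. True)" using ultrafilter_onD(1)[OF uf] unfolding ae_def by simp
  next
    fix P Q :: "'d fn \<Rightarrow> bool"
    assume "ae U P" "ae U Q"
    then have "{\<phi>\<in>D0. P \<phi>} \<inter> {\<phi>\<in>D0. Q \<phi>} \<in> U"
      unfolding ae_def by (rule ultrafilter_onD(3)[OF uf])
    moreover have "{\<phi>\<in>D0. P \<phi>} \<inter> {\<phi>\<in>D0. Q \<phi>} = {\<phi>\<in>D0. P \<phi> \<and> Q \<phi>}" by blast
    ultimately show "ae U (\<lambda>\<phi>. P \<phi> \<and> Q \<phi>)" unfolding ae_def by simp
  next
    fix P Q :: "'d fn \<Rightarrow> bool"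
    assume "\<forall>\<phi>. P \<phi> \<longrightarrow> Q \<phi>" "ae U P"
    then show "ae U Q" unfolding ae_def by (auto intro: ultrafilter_onD(4)[OF uf])
  qed
  then show ?thesis unfolding ufilter_def by (rule eventually_Abs_filter)
qed

lemma ufilter_ultra:
  assumes uf: "ultrafilter_on D0 U"
  shows "eventually P (ufilter U) \<or> eventually (\<lambda>\<phi>. \<not> P \<phi>) (ufilter U)"
proof -
  have "D0 - {\<phi>\<in>D0. P \<phi>} = {\<phi>\<in>D0. \<not> P \<phi>}" by blast
  then show ?thesis
    using ultrafilter_onD(5)[OF uf, of "{\<phi>\<in>D0. P \<phi>}"]
    unfolding eventually_ufilter[OF uf] ae_def by simp
qed

lemma ufilter_neq_bot:
  assumes uf: "ultrafilter_on D0 U"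
  shows "ufilter U \<noteq> bot"
  using ultrafilter_onD(2)[OF uf]
  unfolding eventually_False[symmetric] eventually_ufilter[OF uf] ae_def by simp

lemma eventually_in_D0:
  assumes uf: "ultrafilter_on D0 U"
  shows "eventually (\<lambda>\<phi>. \<phi> \<in> D0) (ufilter U)"
  using ultrafilter_onD(1)[OF uf] unfolding eventually_ufilter[OF uf] ae_def by simp

lemma ultrafilter_tendsto_in_compact:
  fixes \<xi> :: "'a \<Rightarrow> 'b::topological_space"
  assumes "F \<noteq> bot" and ultra: "\<And>P. eventually P F \<or> eventually (\<lambda>x. \<not> P x) F"
    and "compact K" "eventually (\<lambda>x. \<xi> x \<in> K) F"
  shows "\<exists>y\<in>K. (\<xi> \<longlongrightarrow> y) F"
proof -
  have "filtermap \<xi> F \<noteq> bot" "eventually (\<lambda>y. y \<in> K) (filtermap \<xi> F)"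
    using assms(1,4) by (simp_all add: filtermap_bot_iff eventually_filtermap)
  then obtain y where "y \<in> K" and y: "inf (nhds y) (filtermap \<xi> F) \<noteq> bot"
    using \<open>compact K\<close> unfolding compact_filter by blast
  have "(\<xi> \<longlongrightarrow> y) F"
  proof (rule topological_tendstoI)
    fix S assume "open S" "y \<in> S"
    show "eventually (\<lambda>x. \<xi> x \<in> S) F"
    proof (rule ccontr)
      assume "\<not> eventually (\<lambda>x. \<xi> x \<in> S) F"
      then have "eventually (\<lambda>z. z \<notin> S) (filtermap \<xi> F)"
        using ultra[of "\<lambda>x. \<xi> x \<in> S"] by (simp add: eventually_filtermap)
      moreover have "eventually (\<lambda>z. z \<in> S) (nhds y)"
        using \<open>open S\<close> \<open>y \<in> S\<close> by (rule eventually_nhds_in_open)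
      ultimately have "eventually (\<lambda>_. False) (inf (nhds y) (filtermap \<xi> F))"
        unfolding eventually_inf by blast
      with y show False by simp
    qed
  qed
  with \<open>y \<in> K\<close> show ?thesis ..
qed

lemma monad_iff_tendsto:
  assumes uf: "ultrafilter_on D0 U"
  shows "monad U \<Omega> \<xi> \<longleftrightarrow> (\<exists>x\<in>\<Omega>. (\<xi> \<longlongrightarrow> x) (ufilter U))"
proof -
  have key: "(\<forall>n::nat. n \<ge> 1 \<longrightarrow> eventually (\<lambda>\<phi>. norm (\<xi> \<phi> - x) < 1 / real n) (ufilter U))
      \<longleftrightarrow> (\<forall>e>0. eventually (\<lambda>\<phi>. dist (\<xi> \<phi>) x < e) (ufilter U))" for x
  proof (intro iffI allI impI)
    fix e :: real assume "e > 0" and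
      H: "\<forall>n::nat. n \<ge> 1 \<longrightarrow> eventually (\<lambda>\<phi>. norm (\<xi> \<phi> - x) < 1 / real n) (ufilter U)"
    obtain n :: nat where "n \<ge> 1" "1 / real n < e"
      using ex_inverse_of_nat_less[OF \<open>e > 0\<close>] by (auto simp: inverse_eq_divide Suc_le_eq)
    from H[rule_format, OF this(1)] show "eventually (\<lambda>\<phi>. dist (\<xi> \<phi>) x < e) (ufilter U)"
      by (rule eventually_mono) (use \<open>1 / real n < e\<close> in \<open>simp add: dist_norm\<close>)
  next
    fix n :: nat assume "n \<ge> 1" and H: "\<forall>e>0. eventually (\<lambda>\<phi>. dist (\<xi> \<phi>) x < e) (ufilter U)"
    from H[rule_format, of "1 / real n"] \<open>n \<ge> 1\<close>
    show "eventually (\<lambda>\<phi>. norm (\<xi> \<phi> - x) < 1 / real n) (ufilter U)"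
      by (simp add: dist_norm)
  qed
  show ?thesis
    unfolding monad_def tendsto_iff eventually_ufilter[OF uf, symmetric] key ..
qed

lemma monad_eventually_in_compact:
  assumes uf: "ultrafilter_on D0 U" and "open \<Omega>" "monad U \<Omega> \<xi>"
  shows "\<exists>K. compact K \<and> K \<subseteq> \<Omega> \<and> eventually (\<lambda>\<phi>. \<xi> \<phi> \<in> K) (ufilter U)"
proof -
  obtain x where "x \<in> \<Omega>" and lim: "(\<xi> \<longlongrightarrow> x) (ufilter U)"
    using assms(3) unfolding monad_iff_tendsto[OF uf] ..
  obtain r where "r > 0" and r: "cball x r \<subseteq> \<Omega>"
    using open_contains_cball_eq[OF \<open>open \<Omega>\<close>] \<open>x \<in> \<Omega>\<close> by blast
  have "eventually (\<lambda>\<phi>. \<xi> \<phi> \<in> ball x r) (ufilter U)"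
    using lim open_ball centre_in_ball[THEN iffD2, OF \<open>r > 0\<close>] by (rule topological_tendstoD)
  then have "eventually (\<lambda>\<phi>. \<xi> \<phi> \<in> cball x r) (ufilter U)"
    by (rule eventually_mono) (rule ball_subset_cball[THEN subsetD])
  then show ?thesis using compact_cball r by blast
qed

lemma monad_point_of_max:
  fixes g :: "'d::finite fn \<Rightarrow> real^'d \<Rightarrow> real"
  assumes uf: "ultrafilter_on D0 U" and "compact K" "K \<subseteq> \<Omega>" "K \<noteq> {}"
    and cont: "\<forall>\<phi>\<in>D0. continuous_on K (g \<phi>)"
  shows "\<exists>\<xi>. monad U \<Omega> \<xi> \<and> eventually (\<lambda>\<phi>. \<forall>x\<in>K. g \<phi> x \<le> g \<phi> (\<xi> \<phi>)) (ufilter U)"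
proof -
  define \<xi> where "\<xi> \<phi> = (SOME z. z \<in> K \<and> (\<forall>x\<in>K. g \<phi> x \<le> g \<phi> z))" for \<phi>
  have max: "\<xi> \<phi> \<in> K \<and> (\<forall>x\<in>K. g \<phi> x \<le> g \<phi> (\<xi> \<phi>))" if "\<phi> \<in> D0" for \<phi>
  proof -
    from cont that have "continuous_on K (g \<phi>)" ..
    then have "\<exists>z. z \<in> K \<and> (\<forall>x\<in>K. g \<phi> x \<le> g \<phi> z)"
      using continuous_attains_sup[OF \<open>compact K\<close> \<open>K \<noteq> {}\<close>] by blast
    then show ?thesis unfolding \<xi>_def by (rule someI_ex)
  qed
  have ev: "eventually (\<lambda>\<phi>. \<xi> \<phi> \<in> K \<and> (\<forall>x\<in>K. g \<phi> x \<le> g \<phi> (\<xi> \<phi>))) (ufilter U)"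
    using eventually_in_D0[OF uf] by (rule eventually_mono) (rule max)
  then have "eventually (\<lambda>\<phi>. \<xi> \<phi> \<in> K) (ufilter U)"
    by (rule eventually_mono) (rule conjunct1)
  then obtain y where "y \<in> K" "(\<xi> \<longlongrightarrow> y) (ufilter U)"
    using ultrafilter_tendsto_in_compact[OF ufilter_neq_bot[OF uf] ufilter_ultra[OF uf] \<open>compact K\<close>]
    by blast
  then have "monad U \<Omega> \<xi>"
    unfolding monad_iff_tendsto[OF uf] using \<open>K \<subseteq> \<Omega>\<close> by blast
  moreover have "eventually (\<lambda>\<phi>. \<forall>x\<in>K. g \<phi> x \<le> g \<phi> (\<xi> \<phi>)) (ufilter U)"
    using ev by (rule eventually_mono) (rule conjunct2)
  ultimately show ?thesis by blast
qed

lemma Rphi_pos: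
  assumes "\<phi> \<in> D0"
  shows "0 < Rphi \<phi>"
proof (cases "\<forall>x. \<phi> x = 0")
  case True
  then show ?thesis by (simp add: Rphi_def)
next
  case False
  define S where "S = {x. \<phi> x \<noteq> 0}"
  have "continuous_on UNIV (foldr partial [] \<phi>)"
    using assms unfolding D0_def smooth_on_def by blast
  then have "continuous_on UNIV \<phi>" by (simp only: foldr_Nil id_apply)
  then have "open S"
    unfolding S_def by (rule open_Collect_neq[OF _ continuous_on_const])
  moreover have "S \<noteq> {}" using False unfolding S_def by blast
  ultimately obtain z where "z \<in> S" "z \<noteq> 0"
    using not_open_singleton[of "0 :: real^'a"] by (metis insertI1 subset_singletonD subsetI)
  have "compact (closure S)" using assms unfolding D0_def S_def by blast
  then have "bounded S"
    using closure_subset[of S] by (rule bounded_subset[OF compact_imp_bounded])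
  then have "bdd_above (norm ` S)"
    by (simp only: bdd_above_norm)
  then have "norm z \<le> Sup (norm ` S)"
    by (rule cSup_upper[OF imageI[OF \<open>z \<in> S\<close>]])
  moreover have "Rphi \<phi> = Sup (norm ` S)"
  proof -
    have "{norm x |x. \<phi> x \<noteq> 0} = norm ` S" unfolding S_def by blast
    moreover have "Rphi \<phi> = Sup {norm x |x. \<phi> x \<noteq> 0}"
      unfolding Rphi_def using False by (rule if_not_P)
    ultimately show ?thesis by simp
  qed
  moreover have "0 < norm z" using \<open>z \<noteq> 0\<close> by simp
  ultimately show ?thesis by linarith
qed

lemma continuous_on_norm_dmulti:
  assumes "net_in_E \<Omega> f" "K \<subseteq> \<Omega>"
  shows "\<forall>\<phi>\<in>D0. continuous_on K (\<lambda>x. norm (dmulti \<alpha> (f \<phi>) x))"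
  using assms unfolding net_in_E_def
  by (blast intro: continuous_on_norm continuous_on_subset continuous_on_dmulti)

lemma Mod_iff_Mrho_E:
  assumes uf: "ultrafilter_on D0 U" and "open \<Omega>"
  shows "Mod U \<Omega> f \<longleftrightarrow> Mrho_E U \<Omega> f"
proof
  assume M: "Mod U \<Omega> f"
  show "Mrho_E U \<Omega> f"
    unfolding Mrho_E_def star_Mrho_def eventually_ufilter[OF uf, symmetric]
  proof (intro conjI allI impI)
    show "net_in_E \<Omega> f" using M unfolding Mod_def by blast
    fix \<alpha> \<xi> assume "monad U \<Omega> \<xi>"
    then obtain K where K: "compact K" "K \<subseteq> \<Omega>" and in_K: "eventually (\<lambda>\<phi>. \<xi> \<phi> \<in> K) (ufilter U)"
      using monad_eventually_in_compact[OF uf \<open>open \<Omega>\<close>] by blast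
    obtain m :: nat where "m \<ge> 1" and bound:
      "eventually (\<lambda>\<phi>. \<forall>x\<in>K. norm (dmulti \<alpha> (f \<phi>) x) \<le> (1 / Rphi \<phi>) ^ m) (ufilter U)"
      using M K unfolding Mod_def eventually_ufilter[OF uf, symmetric] by blast
    from in_K bound have "eventually (\<lambda>\<phi>. norm (dmulti \<alpha> (f \<phi>) (\<xi> \<phi>)) \<le> (1 / Rphi \<phi>) ^ m) (ufilter U)"
      by eventually_elim blast
    with \<open>m \<ge> 1\<close> show "\<exists>m::nat. m \<ge> 1 \<and>
        eventually (\<lambda>\<phi>. norm (dmulti \<alpha> (f \<phi>) (\<xi> \<phi>)) \<le> (1 / Rphi \<phi>) ^ m) (ufilter U)"
      by blast
  qed
next
  assume M: "Mrho_E U \<Omega> f"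
  then have E: "net_in_E \<Omega> f" unfolding Mrho_E_def by blast
  show "Mod U \<Omega> f"
    unfolding Mod_def eventually_ufilter[OF uf, symmetric]
  proof (intro conjI allI impI E)
    fix K \<alpha> assume K: "compact K \<and> K \<subseteq> \<Omega>"
    show "\<exists>m::nat. m \<ge> 1 \<and>
        eventually (\<lambda>\<phi>. \<forall>x\<in>K. norm (dmulti \<alpha> (f \<phi>) x) \<le> (1 / Rphi \<phi>) ^ m) (ufilter U)"
    proof (cases "K = {}")
      case True
      then show ?thesis by (intro exI[of _ 1]) simp
    next
      case False
      obtain \<xi> where "monad U \<Omega> \<xi>" and max:
        "eventually (\<lambda>\<phi>. \<forall>x\<in>K. norm (dmulti \<alpha> (f \<phi>) x) \<le> norm (dmulti \<alpha> (f \<phi>) (\<xi> \<phi>))) (ufilter U)"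
        using monad_point_of_max[OF uf _ _ False continuous_on_norm_dmulti[OF E]] K by blast
      obtain m :: nat where "m \<ge> 1" and bound:
        "eventually (\<lambda>\<phi>. norm (dmulti \<alpha> (f \<phi>) (\<xi> \<phi>)) \<le> (1 / Rphi \<phi>) ^ m) (ufilter U)"
        using M \<open>monad U \<Omega> \<xi>\<close>
        unfolding Mrho_E_def star_Mrho_def eventually_ufilter[OF uf, symmetric] by blast
      from max bound have "eventually (\<lambda>\<phi>. \<forall>x\<in>K. norm (dmulti \<alpha> (f \<phi>) x) \<le> (1 / Rphi \<phi>) ^ m) (ufilter U)"
        by eventually_elim (meson order_trans)
      with \<open>m \<ge> 1\<close> show ?thesis by blast
    qed
  qed
qed

lemma eventually_Rphi_pos:
  assumes uf: "ultrafilter_on D0 U"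
  shows "eventually (\<lambda>\<phi>. 0 < Rphi \<phi>) (ufilter U)"
  using eventually_in_D0[OF uf] by (rule eventually_mono) (rule Rphi_pos)

lemma eventually_Rphi_le:
  assumes uf: "ultrafilter_on D0 U" and "Dn n \<in> U"
  shows "eventually (\<lambda>\<phi>. Rphi \<phi> \<le> 1 / real n) (ufilter U)"
  unfolding eventually_ufilter[OF uf] ae_def
  by (rule ultrafilter_onD(4)[OF uf \<open>Dn n \<in> U\<close>]) (auto simp: Dn_def)

lemma NegD:
  assumes uf: "ultrafilter_on D0 U" and "Neg U \<Omega> f" "compact K" "K \<subseteq> \<Omega>" "p \<ge> 1"
  shows "eventually (\<lambda>\<phi>. \<forall>x\<in>K. norm (dmulti \<alpha> (f \<phi>) x) \<le> Rphi \<phi> ^ p) (ufilter U)"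
  using assms(2-) unfolding Neg_def eventually_ufilter[OF uf] by blast

lemma Neg_iff_Nrho_E:
  assumes uf: "ultrafilter_on D0 U" and "open \<Omega>"
    and small: "eventually (\<lambda>\<phi>. Rphi \<phi> < 1) (ufilter U)"
  shows "Neg U \<Omega> f \<longleftrightarrow> Nrho_E U \<Omega> f"
proof
  assume N: "Neg U \<Omega> f"
  show "Nrho_E U \<Omega> f"
    unfolding Nrho_E_def star_Nrho_def eventually_ufilter[OF uf, symmetric]
  proof (intro conjI allI impI)
    show "net_in_E \<Omega> f" using N unfolding Neg_def by blast
    fix \<alpha> \<xi> and n :: nat assume "monad U \<Omega> \<xi>" "n \<ge> 1"
    then obtain K where K: "compact K" "K \<subseteq> \<Omega>" and in_K: "eventually (\<lambda>\<phi>. \<xi> \<phi> \<in> K) (ufilter U)"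
      using monad_eventually_in_compact[OF uf \<open>open \<Omega>\<close>] by blast
    have bound: "eventually (\<lambda>\<phi>. \<forall>x\<in>K. norm (dmulti \<alpha> (f \<phi>) x) \<le> Rphi \<phi> ^ Suc n) (ufilter U)"
      by (rule NegD[OF uf N K]) simp
    from in_K bound small eventually_Rphi_pos[OF uf]
    show "eventually (\<lambda>\<phi>. norm (dmulti \<alpha> (f \<phi>) (\<xi> \<phi>)) < Rphi \<phi> ^ n) (ufilter U)"
    proof eventually_elim
      case (elim \<phi>)
      then have "norm (dmulti \<alpha> (f \<phi>) (\<xi> \<phi>)) \<le> Rphi \<phi> ^ Suc n" by blast
      also have "\<dots> < Rphi \<phi> ^ n"
        using elim by (simp add: power_strict_decreasing)
      finally show ?case .
    qed
  qed
next
  assume N: "Nrho_E U \<Omega> f"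
  then have E: "net_in_E \<Omega> f" unfolding Nrho_E_def by blast
  show "Neg U \<Omega> f"
    unfolding Neg_def eventually_ufilter[OF uf, symmetric]
  proof (intro conjI allI impI E)
    fix K \<alpha> and p :: nat assume K: "compact K \<and> K \<subseteq> \<Omega> \<and> p \<ge> 1"
    show "eventually (\<lambda>\<phi>. \<forall>x\<in>K. norm (dmulti \<alpha> (f \<phi>) x) \<le> Rphi \<phi> ^ p) (ufilter U)"
    proof (cases "K = {}")
      case True
      then show ?thesis by simp
    next
      case False
      obtain \<xi> where "monad U \<Omega> \<xi>" and max:
        "eventually (\<lambda>\<phi>. \<forall>x\<in>K. norm (dmulti \<alpha> (f \<phi>) x) \<le> norm (dmulti \<alpha> (f \<phi>) (\<xi> \<phi>))) (ufilter U)"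
        using monad_point_of_max[OF uf _ _ False continuous_on_norm_dmulti[OF E]] K by blast
      have "eventually (\<lambda>\<phi>. norm (dmulti \<alpha> (f \<phi>) (\<xi> \<phi>)) < Rphi \<phi> ^ p) (ufilter U)"
        using N \<open>monad U \<Omega> \<xi>\<close> K
        unfolding Nrho_E_def star_Nrho_def eventually_ufilter[OF uf, symmetric] by blast
      with max show ?thesis
        by eventually_elim (blast intro: order_trans less_imp_le)
    qed
  qed
qed

text \<open>This is where \<open>R\<^sub>\<phi> \<le> 1/2\<close> a.e. is needed: \<open>2 R\<^sub>\<phi>^(p+1) \<le> R\<^sub>\<phi>^p\<close>.\<close>

lemma Neg_diff:
  assumes uf: "ultrafilter_on D0 U" and "open \<Omega>"
    and half: "eventually (\<lambda>\<phi>. Rphi \<phi> \<le> 1 / 2) (ufilter U)"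
    and Na: "Neg U \<Omega> a" and Nb: "Neg U \<Omega> b"
  shows "Neg U \<Omega> (\<lambda>\<phi> x. a \<phi> x - b \<phi> x)"
proof -
  have Ea: "net_in_E \<Omega> a" and Eb: "net_in_E \<Omega> b"
    using Na Nb unfolding Neg_def by blast+
  show ?thesis
    unfolding Neg_def eventually_ufilter[OF uf, symmetric]
  proof (intro conjI allI impI)
    show "net_in_E \<Omega> (\<lambda>\<phi> x. a \<phi> x - b \<phi> x)"
      using Ea Eb smooth_on_diff[OF \<open>open \<Omega>\<close>] unfolding net_in_E_def by blast
    fix K \<alpha> and p :: nat assume K: "compact K \<and> K \<subseteq> \<Omega> \<and> p \<ge> 1"
    have "eventually (\<lambda>\<phi>. \<forall>x\<in>K. norm (dmulti \<alpha> (a \<phi>) x) \<le> Rphi \<phi> ^ Suc p) (ufilter U)"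
      and "eventually (\<lambda>\<phi>. \<forall>x\<in>K. norm (dmulti \<alpha> (b \<phi>) x) \<le> Rphi \<phi> ^ Suc p) (ufilter U)"
      using K by (intro NegD[OF uf Na] NegD[OF uf Nb]; simp)+
    with eventually_in_D0[OF uf] half
    show "eventually (\<lambda>\<phi>. \<forall>x\<in>K. norm (dmulti \<alpha> (\<lambda>x. a \<phi> x - b \<phi> x) x) \<le> Rphi \<phi> ^ p) (ufilter U)"
    proof eventually_elim
      case (elim \<phi>)
      show ?case
      proof
        fix x assume "x \<in> K"
        with K have "x \<in> \<Omega>" by blast
        have "norm (dmulti \<alpha> (\<lambda>x. a \<phi> x - b \<phi> x) x) = norm (dmulti \<alpha> (a \<phi>) x - dmulti \<alpha> (b \<phi>) x)"
          using Ea Eb \<open>\<phi> \<in> D0\<close> \<open>x \<in> \<Omega>\<close> unfolding net_in_E_def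
          by (simp add: dmulti_diff[OF \<open>open \<Omega>\<close>])
        also have "\<dots> \<le> Rphi \<phi> ^ Suc p + Rphi \<phi> ^ Suc p"
          using elim \<open>x \<in> K\<close> by (meson norm_triangle_le_diff add_mono)
        also have "\<dots> = (2 * Rphi \<phi>) * Rphi \<phi> ^ p" by simp
        also have "\<dots> \<le> Rphi \<phi> ^ p"
          using elim Rphi_pos[OF \<open>\<phi> \<in> D0\<close>] by (simp add: mult_left_le_one_le)
        finally show "norm (dmulti \<alpha> (\<lambda>x. a \<phi> x - b \<phi> x) x) \<le> Rphi \<phi> ^ p" .
      qed
    qed
  qed
qed

lemma Neg_self_diff:
  fixes f :: "'d::finite net"
  assumes uf: "ultrafilter_on D0 U" and "open \<Omega>" and E: "net_in_E \<Omega> f"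
  shows "Neg U \<Omega> (\<lambda>\<phi> x. f \<phi> x - f \<phi> x)"
  unfolding Neg_def eventually_ufilter[OF uf, symmetric]
proof (intro conjI allI impI)
  show "net_in_E \<Omega> (\<lambda>\<phi> x. f \<phi> x - f \<phi> x)"
    using E smooth_on_diff[OF \<open>open \<Omega>\<close>] unfolding net_in_E_def by blast
  fix K \<alpha> and p :: nat assume K: "compact K \<and> K \<subseteq> \<Omega> \<and> p \<ge> 1"
  show "eventually (\<lambda>\<phi>. \<forall>x\<in>K. norm (dmulti \<alpha> (\<lambda>x. f \<phi> x - f \<phi> x) x) \<le> Rphi \<phi> ^ p) (ufilter U)"
    using eventually_in_D0[OF uf]
  proof (rule eventually_mono, intro ballI)
    fix \<phi> :: "'d fn" and x assume "\<phi> \<in> D0" "x \<in> K"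
    then have "smooth_on \<Omega> (f \<phi>)" "x \<in> \<Omega>"
      using E K unfolding net_in_E_def by blast+
    then have "dmulti \<alpha> (\<lambda>x. f \<phi> x - f \<phi> x) x = 0"
      by (subst dmulti_diff[OF \<open>open \<Omega>\<close>]) simp_all
    then show "norm (dmulti \<alpha> (\<lambda>x. f \<phi> x - f \<phi> x) x) \<le> Rphi \<phi> ^ p"
      using Rphi_pos[OF \<open>\<phi> \<in> D0\<close>] by simp
  qed
qed

lemma relMN_sym:
  fixes U :: "'d::finite fn set set"
  assumes uf: "ultrafilter_on D0 U" and "open \<Omega>"
    and half: "eventually (\<lambda>\<phi>. Rphi \<phi> \<le> 1 / 2) (ufilter U)"
  shows "sym (relMN U \<Omega>)"
proof (rule symI)
  fix f g :: "'d net" assume "(f, g) \<in> relMN U \<Omega>"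
  then have "Mod U \<Omega> f" "Mod U \<Omega> g" and N: "Neg U \<Omega> (\<lambda>\<phi> x. f \<phi> x - g \<phi> x)"
    unfolding relMN_def by auto
  then have "Neg U \<Omega> (\<lambda>\<phi> x. g \<phi> x - g \<phi> x)"
    unfolding Mod_def by (intro Neg_self_diff[OF uf \<open>open \<Omega>\<close>]) blast
  from Neg_diff[OF uf \<open>open \<Omega>\<close> half this N]
  have "Neg U \<Omega> (\<lambda>\<phi> x. g \<phi> x - f \<phi> x)" by simp
  with \<open>Mod U \<Omega> f\<close> \<open>Mod U \<Omega> g\<close> show "(g, f) \<in> relMN U \<Omega>"
    unfolding relMN_def by blast
qed

lemma relMN_trans:
  fixes U :: "'d::finite fn set set"
  assumes uf: "ultrafilter_on D0 U" and "open \<Omega>"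
    and half: "eventually (\<lambda>\<phi>. Rphi \<phi> \<le> 1 / 2) (ufilter U)"
  shows "trans (relMN U \<Omega>)"
proof (rule transI)
  fix f g h :: "'d net" assume fg: "(f, g) \<in> relMN U \<Omega>" and gh: "(g, h) \<in> relMN U \<Omega>"
  then have "(h, g) \<in> relMN U \<Omega>"
    using relMN_sym[OF assms] by (blast dest: symD)
  with fg have "Mod U \<Omega> f" "Mod U \<Omega> h"
    and "Neg U \<Omega> (\<lambda>\<phi> x. f \<phi> x - g \<phi> x)" "Neg U \<Omega> (\<lambda>\<phi> x. h \<phi> x - g \<phi> x)"
    unfolding relMN_def by auto
  from Neg_diff[OF uf \<open>open \<Omega>\<close> half this(3,4)]
  have "Neg U \<Omega> (\<lambda>\<phi> x. f \<phi> x - h \<phi> x)" by simp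
  with \<open>Mod U \<Omega> f\<close> \<open>Mod U \<Omega> h\<close> show "(f, h) \<in> relMN U \<Omega>"
    unfolding relMN_def by blast
qed

lemma relMN_eq_relRho:
  assumes uf: "ultrafilter_on D0 U" and "open \<Omega>"
    and small: "eventually (\<lambda>\<phi>. Rphi \<phi> < 1) (ufilter U)"
  shows "relMN U \<Omega> = relRho U \<Omega>"
  unfolding relMN_def relRho_def Mod_iff_Mrho_E[OF uf \<open>open \<Omega>\<close>]
    Neg_iff_Nrho_E[OF assms] ..

lemma UN_Image_classes:
  assumes "sym R" "trans R" "\<forall>A\<in>S. \<exists>h. A = R `` {h}"
  shows "(\<Union>f\<in>\<Union>S. R `` {f}) = \<Union>S"
proof -
  have "R `` {f} = A" if "A \<in> S" "f \<in> A" for A f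
  proof -
    obtain h where "A = R `` {h}" using assms(3) \<open>A \<in> S\<close> by blast
    with \<open>f \<in> A\<close> have "(h, f) \<in> R" by blast
    with assms(1,2) show ?thesis
      unfolding \<open>A = R `` {h}\<close> by (blast dest: symD transD)
  qed
  then show ?thesis by blast
qed

lemma Phi_Union_classes:
  fixes U :: "'d::finite fn set set"
  assumes uf: "ultrafilter_on D0 U" and "open \<Omega>"
    and half: "eventually (\<lambda>\<phi>. Rphi \<phi> \<le> 1 / 2) (ufilter U)"
    and S: "\<forall>A\<in>S. \<exists>h. A = relRho U \<Omega> `` {h}"
  shows "Phi U \<Omega> (\<Union>S) = \<Union>S"
proof -
  have "eventually (\<lambda>\<phi>. Rphi \<phi> < 1) (ufilter U)"
    using half by (rule eventually_mono) simp
  then have "relMN U \<Omega> = relRho U \<Omega>"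
    by (rule relMN_eq_relRho[OF uf \<open>open \<Omega>\<close>])
  with relMN_sym[OF uf \<open>open \<Omega>\<close> half] relMN_trans[OF uf \<open>open \<Omega>\<close> half] S
  show ?thesis unfolding Phi_def by (simp only: UN_Image_classes)
qed

lemma Phi_class:
  fixes U :: "'d::finite fn set set"
  assumes uf: "ultrafilter_on D0 U" and "open \<Omega>"
    and half: "eventually (\<lambda>\<phi>. Rphi \<phi> \<le> 1 / 2) (ufilter U)"
  shows "Phi U \<Omega> (relRho U \<Omega> `` {f}) = relRho U \<Omega> `` {f}"
proof -
  have "Phi U \<Omega> (\<Union>{relRho U \<Omega> `` {f}}) = \<Union>{relRho U \<Omega> `` {f}}"
    by (rule Phi_Union_classes[OF assms]) blast
  then show ?thesis by simp
qed

theorem theorem7p12: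
  fixes U :: "('d::finite fn) set set" and \<Omega> :: "(real^'d) set"
  assumes "open \<Omega>"
    and "free_ultrafilter_on D0 U"
    and "cplus_good U"
    and "\<forall>n::nat. n \<ge> 1 \<longrightarrow> Dn n \<in> U"
  shows "(\<forall>f. net_in_E \<Omega> f \<longrightarrow> (Mod U \<Omega> f \<longleftrightarrow> Mrho_E U \<Omega> f))
    \<and> (\<forall>f. Mod U \<Omega> f \<longrightarrow> Phi U \<Omega> (relMN U \<Omega> `` {f}) = relRho U \<Omega> `` {f})
    \<and> bij_betw (Phi U \<Omega>) (Ehat U \<Omega>) (rhoE U \<Omega>)
    \<and> (\<forall>X\<in>Ehat U \<Omega>. \<forall>Y\<in>Ehat U \<Omega>.
          Phi U \<Omega> (qadd (relMN U \<Omega>) X Y) = qadd (relRho U \<Omega>) (Phi U \<Omega> X) (Phi U \<Omega> Y)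
        \<and> Phi U \<Omega> (qmul (relMN U \<Omega>) X Y) = qmul (relRho U \<Omega>) (Phi U \<Omega> X) (Phi U \<Omega> Y))
    \<and> (\<forall>c. \<forall>X\<in>Ehat U \<Omega>. Phi U \<Omega> (qscal (relMN U \<Omega>) c X) = qscal (relRho U \<Omega>) c (Phi U \<Omega> X))
    \<and> (\<forall>\<alpha>. \<forall>X\<in>Ehat U \<Omega>. Phi U \<Omega> (qder (relMN U \<Omega>) \<alpha> X) = qder (relRho U \<Omega>) \<alpha> (Phi U \<Omega> X))
    \<and> Phi U \<Omega> (qone (relMN U \<Omega>)) = qone (relRho U \<Omega>)"
proof -
  have uf: "ultrafilter_on D0 U" using assms(2) unfolding free_ultrafilter_on_def by blast
  have half: "eventually (\<lambda>\<phi>. Rphi \<phi> \<le> 1 / 2) (ufilter U)"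
    using eventually_Rphi_le[OF uf, of 2] assms(4) by simp
  then have "eventually (\<lambda>\<phi>. Rphi \<phi> < 1) (ufilter U)"
    by (rule eventually_mono) simp
  then have MN: "relMN U \<Omega> = relRho U \<Omega>"
    by (rule relMN_eq_relRho[OF uf \<open>open \<Omega>\<close>])
  note Phi_Union = Phi_Union_classes[OF uf \<open>open \<Omega>\<close> half]
  note Phi_class = Phi_class[OF uf \<open>open \<Omega>\<close> half]
  have Ehat: "Ehat U \<Omega> = rhoE U \<Omega>"
    unfolding Ehat_def rhoE_def Mod_iff_Mrho_E[OF uf \<open>open \<Omega>\<close>] MN by (rule refl)
  have Phi_id: "Phi U \<Omega> X = X" if "X \<in> Ehat U \<Omega>" for X
    using that unfolding Ehat_def MN by (rule quotientE) (simp only: Phi_class)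
  have "bij_betw (Phi U \<Omega>) (Ehat U \<Omega>) (Ehat U \<Omega>)"
    using bij_betw_id by (rule bij_betw_cong[THEN iffD1, rotated]) (simp add: Phi_id)
  moreover have "Phi U \<Omega> (qadd (relRho U \<Omega>) X Y) = qadd (relRho U \<Omega>) X Y"
    and "Phi U \<Omega> (qmul (relRho U \<Omega>) X Y) = qmul (relRho U \<Omega>) X Y"
    and "Phi U \<Omega> (qscal (relRho U \<Omega>) c X) = qscal (relRho U \<Omega>) c X"
    and "Phi U \<Omega> (qder (relRho U \<Omega>) \<alpha> X) = qder (relRho U \<Omega>) \<alpha> X" for X Y c \<alpha>
    unfolding qadd_def qmul_def qscal_def qder_def by (rule Phi_Union; blast)+
  ultimately show ?thesis
    unfolding MN Ehat[symmetric] qone_def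
    using Mod_iff_Mrho_E[OF uf \<open>open \<Omega>\<close>] by (simp add: Phi_class Phi_id)
qed

end
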